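(* For every $x\in\mathrm{mon}(\mathcal{B})$, \[ \sup_{N\in\mathbb{N}}\frac1{\sqrt N}\sum_{n=1}^N|x_n|<\infty; \] in particular $\mathrm{mon}(\mathcal{B})\subset\ell_{2,\infty}$.
   Context: For $N\in\mathbb{N}$, $\mathcal{B}_N$ is the space of functions $f\colon\{-1,1\}^N\to\mathbb{R}$ with sup norm and Fourier–Walsh coefficients $\widehat f(S)=2^{-N}\sum_xf(x)x^S$, $x^S=\prod_{n\in S}x_n$; $\mathcal{B}=\bigcup_N\mathcal{B}_N$. $\mathrm{mon}(\mathcal{B})$ is the set of $x\in\mathbb{R}^{\mathbb{N}}$ for which there is $C>0$ such that $\sum_{S\subset\{1,\dots,N\}}|\widehat f(S)x^S|\le C\|f\|_\infty$ for all $N$ and all $f\in\mathcal{B}_N$. $\ell_{2,\infty}$ is the space of real sequences $x$ with $\sup_n\sqrt n\,x^*_n<\infty$, $x^*$ the decreasing rearrangement of $(|x_n|)$. *)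

theory Defs
  imports "HOL-Analysis.Analysis" "HOL-Library.FuncSet"
begin

definition cube :: "nat \<Rightarrow> (nat \<Rightarrow> real) set" where
  "cube N = PiE {1..N} (\<lambda>_. {-1, 1})"

definition supnorm :: "nat \<Rightarrow> ((nat \<Rightarrow> real) \<Rightarrow> real) \<Rightarrow> real" where
  "supnorm N f = Max ((\<lambda>x. \<bar>f x\<bar>) ` cube N)"

definition walsh_coeff :: "nat \<Rightarrow> ((nat \<Rightarrow> real) \<Rightarrow> real) \<Rightarrow> nat set \<Rightarrow> real" where
  "walsh_coeff N f S = (1 / 2 ^ N) * (\<Sum>x\<in>cube N. f x * (\<Prod>n\<in>S. x n))"

text \<open>mon(B): sequences x = (x_1, x_2, ...) (value at 0 irrelevant).\<close>
definition monB :: "(nat \<Rightarrow> real) set" where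
  "monB = {x. \<exists>C>0. \<forall>N. \<forall>f :: (nat \<Rightarrow> real) \<Rightarrow> real.
      (\<Sum>S\<in>Pow {1..N}. \<bar>walsh_coeff N f S * (\<Prod>n\<in>S. x n)\<bar>) \<le> C * supnorm N f}"

text \<open>Decreasing rearrangement x*_n of (|x_k|)_{k>=1}, as an extended real.\<close>
definition dec_rearr :: "(nat \<Rightarrow> real) \<Rightarrow> nat \<Rightarrow> ereal" where
  "dec_rearr x n = (INF J\<in>{J. finite J \<and> card J < n}. SUP k\<in>{1..} - J. ereal \<bar>x k\<bar>)"

definition ell_2_inf :: "(nat \<Rightarrow> real) set" where
  "ell_2_inf = {x. \<exists>C::real. \<forall>n\<ge>1. ereal (sqrt (real n)) * dec_rearr x n \<le> ereal C}"

end

theory Submission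
  imports Defs
begin

text \<open>Test the monotonicity inequality against the imaginary part of the Riesz product
  prod_{k in T} (a + i b y_k) with a^2 + b^2 = 1: its sup norm on the cube is at most 1 and all
  its first-order Walsh coefficients equal a^(m-1) b, where m = |T|. Choosing b = 1/(2 sqrt m)
  gives a^(m-1) >= 3/4, hence sum_{n in T} |x_n| <= 3 C sqrt m for every finite T. For
  T = {1..N} this is the first claim; for a set of n entries larger than K/sqrt n it is a
  contradiction, so fewer than n entries exceed K/sqrt n, i.e. sqrt n x*_n <= K.\<close>

lemma finite_cube: "finite (cube N)"
  unfolding cube_def by (intro finite_PiE) auto

lemma cube_nonempty: "cube N \<noteq> {}"
  unfolding cube_def by (simp add: PiE_eq_empty_iff)

lemma cube_coordinate: "y \<in> cube N \<Longrightarrow> k \<in> {1..N} \<Longrightarrow> y k \<in> {-1, 1}"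
  unfolding cube_def by (auto simp: PiE_def Pi_def)

lemma supnorm_le_iff: "supnorm N f \<le> c \<longleftrightarrow> (\<forall>y\<in>cube N. \<bar>f y\<bar> \<le> c)"
  unfolding supnorm_def using finite_cube cube_nonempty by (subst Max_le_iff) auto

lemma sum_cube_prod_affine_mult_coordinate:
  fixes a c :: complex
  assumes T: "T \<subseteq> {1..N}" and n: "n \<in> T"
  shows "(\<Sum>y\<in>cube N. (\<Prod>k\<in>T. a + c * of_real (y k)) * of_real (y n)) = 2 ^ N * a ^ (card T - 1) * c"
proof -
  define h where "h k v = (if k \<in> T then a + c * of_real v else 1) * (if k = n then of_real v else 1)"
    for k and v :: real
  have nN: "n \<in> {1..N}" using T n by auto
  have factor: "(\<Prod>k\<in>T. a + c * of_real (y k)) * of_real (y n) = (\<Prod>k\<in>{1..N}. h k (y k))" for y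
  proof -
    have "(\<Prod>k\<in>{1..N}. if k \<in> T then a + c * of_real (y k) else 1) = (\<Prod>k\<in>T. a + c * of_real (y k))"
      using T by (subst prod.inter_restrict[symmetric]) (auto simp: Int_absorb1)
    moreover have "(\<Prod>k\<in>{1..N}. if k = n then of_real (y k) else 1) = (of_real (y n) :: complex)"
      using nN by (simp add: prod.delta)
    ultimately show ?thesis unfolding h_def by (simp add: prod.distrib)
  qed
  have "(\<Sum>y\<in>cube N. (\<Prod>k\<in>T. a + c * of_real (y k)) * of_real (y n))
      = (\<Prod>k\<in>{1..N}. \<Sum>v\<in>{-1, 1}. h k v)"
    unfolding factor cube_def by (subst prod_sum_PiE) auto
  also have "\<dots> = (\<Prod>k\<in>{1..N}. 2 * (if k = n then c else if k \<in> T then a else 1))"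
    by (intro prod.cong refl) (auto simp: h_def n algebra_simps)
  also have "\<dots> = 2 ^ N * (c * (\<Prod>k\<in>{1..N} - {n}. if k \<in> T then a else 1))"
    using nN by (simp add: prod.distrib prod.remove[of _ n])
  also have "(\<Prod>k\<in>{1..N} - {n}. if k \<in> T then a else 1) = a ^ card (({1..N} - {n}) \<inter> T)"
    by (subst prod.inter_restrict[symmetric]) auto
  also have "({1..N} - {n}) \<inter> T = T - {n}"
    using T by auto
  finally show ?thesis
    using n finite_subset[OF T] by simp
qed

definition riesz_product :: "nat set \<Rightarrow> real \<Rightarrow> real \<Rightarrow> (nat \<Rightarrow> real) \<Rightarrow> complex" where
  "riesz_product T a b y = (\<Prod>k\<in>T. of_real a + \<i> * of_real b * of_real (y k))"

lemma walsh_coeff_singleton_Im_riesz_product: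
  assumes "T \<subseteq> {1..N}" "n \<in> T"
  shows "walsh_coeff N (\<lambda>y. Im (riesz_product T a b y)) {n} = a ^ (card T - 1) * b"
proof -
  have "walsh_coeff N (\<lambda>y. Im (riesz_product T a b y)) {n}
      = Im (\<Sum>y\<in>cube N. riesz_product T a b y * of_real (y n)) / 2 ^ N"
    unfolding walsh_coeff_def by (simp add: Im_sum)
  also have "\<dots> = a ^ (card T - 1) * b"
    unfolding riesz_product_def sum_cube_prod_affine_mult_coordinate[OF assms]
    by (simp flip: of_real_power)
  finally show ?thesis .
qed

lemma norm_riesz_product_cube:
  assumes "a\<^sup>2 + b\<^sup>2 = 1" "T \<subseteq> {1..N}" "y \<in> cube N"
  shows "cmod (riesz_product T a b y) = 1"
proof -
  have "cmod (of_real a + \<i> * of_real b * of_real (y k)) = 1" if "k \<in> T" for k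
  proof -
    have "y k \<in> {-1, 1}"
      using cube_coordinate[OF assms(3)] assms(2) that by blast
    hence "(y k)\<^sup>2 = 1"
      by auto
    thus ?thesis
      using assms(1) by (simp add: cmod_def power_mult_distrib)
  qed
  thus ?thesis
    unfolding riesz_product_def prod_norm[symmetric] by simp
qed

lemma sum_linear_walsh_terms_le:
  assumes "\<And>f. (\<Sum>S\<in>Pow {1..N}. \<bar>walsh_coeff N f S * (\<Prod>n\<in>S. x n)\<bar>) \<le> C * supnorm N f"
    and "T \<subseteq> {1..N}"
  shows "(\<Sum>n\<in>T. \<bar>walsh_coeff N f {n} * x n\<bar>) \<le> C * supnorm N f"
proof -
  have "(\<Sum>n\<in>T. \<bar>walsh_coeff N f {n} * x n\<bar>)
      = (\<Sum>S\<in>(\<lambda>n. {n}) ` T. \<bar>walsh_coeff N f S * (\<Prod>k\<in>S. x k)\<bar>)"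
    by (subst sum.reindex) (auto simp: inj_on_def)
  also have "\<dots> \<le> (\<Sum>S\<in>Pow {1..N}. \<bar>walsh_coeff N f S * (\<Prod>k\<in>S. x k)\<bar>)"
    using assms(2) by (intro sum_mono2) auto
  finally show ?thesis
    using assms(1) by (meson order_trans)
qed

lemma one_minus_mult_le_sqrt_power:
  fixes t :: real
  assumes "0 \<le> t" "t \<le> 1"
  shows "1 - real k * t \<le> sqrt (1 - t) ^ k"
proof -
  have "1 - real k * t \<le> (1 - t) ^ k"
    using Bernoulli_inequality[of "- t" k] assms by simp
  also have "\<dots> = (sqrt (1 - t) ^ k)\<^sup>2"
    using assms by (simp flip: power_mult add: mult.commute[of k] power_mult)
  also have "\<dots> \<le> sqrt (1 - t) ^ k"
    using assms by (simp add: power2_eq_square mult_left_le power_le_one)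
  finally show ?thesis .
qed

lemma sum_abs_le_sqrt_card:
  fixes x :: "nat \<Rightarrow> real"
  assumes C: "C > 0"
    and mon: "\<And>f. (\<Sum>S\<in>Pow {1..N}. \<bar>walsh_coeff N f S * (\<Prod>n\<in>S. x n)\<bar>) \<le> C * supnorm N f"
    and T: "T \<subseteq> {1..N}"
  shows "(\<Sum>n\<in>T. \<bar>x n\<bar>) \<le> 3 * C * sqrt (card T)"
proof (cases "T = {}")
  case False
  define m where "m = card T"
  have m: "m \<ge> 1"
    using False finite_subset[OF T] by (simp add: m_def Suc_le_eq card_gt_0_iff)
  define b where "b = 1 / (2 * sqrt m)"
  define a where "a = sqrt (1 - b\<^sup>2)"
  have b: "b > 0" "b\<^sup>2 = 1 / (4 * m)"
    using m by (simp_all add: b_def power_divide power_mult_distrib)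
  have b2_le: "b\<^sup>2 \<le> 1 / 4"
    using m by (simp add: b(2) divide_le_eq)
  have ab: "a\<^sup>2 + b\<^sup>2 = 1" and a: "a \<ge> 0"
    using b2_le by (simp_all add: a_def)
  have "3 / 4 \<le> 1 - real (m - 1) * b\<^sup>2"
  proof -
    have "real (m - 1) * b\<^sup>2 \<le> real m * b\<^sup>2"
      by (simp add: mult_right_mono)
    thus ?thesis
      using m b(2) by simp
  qed
  also have "\<dots> \<le> a ^ (m - 1)"
    unfolding a_def using b2_le by (intro one_minus_mult_le_sqrt_power) auto
  finally have a_pow: "3 / 4 \<le> a ^ (m - 1)" .
  define g where "g y = Im (riesz_product T a b y)" for y
  have "supnorm N g \<le> 1"
    unfolding supnorm_le_iff g_def
    using abs_Im_le_cmod norm_riesz_product_cube[OF ab T] by (metis order_refl)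
  hence "(\<Sum>n\<in>T. \<bar>walsh_coeff N g {n} * x n\<bar>) \<le> C"
    using sum_linear_walsh_terms_le[OF mon T, of g] C by (smt (verit) mult_left_le)
  also have "(\<Sum>n\<in>T. \<bar>walsh_coeff N g {n} * x n\<bar>) = a ^ (m - 1) * b * (\<Sum>n\<in>T. \<bar>x n\<bar>)"
    unfolding g_def m_def using walsh_coeff_singleton_Im_riesz_product[OF T] a b
    by (simp add: sum_distrib_left abs_mult)
  finally have "3 / 4 * b * (\<Sum>n\<in>T. \<bar>x n\<bar>) \<le> C"
    using a_pow b(1) by (smt (verit) mult_right_mono sum_nonneg abs_ge_zero)
  hence "(\<Sum>n\<in>T. \<bar>x n\<bar>) \<le> 8 / 3 * C * sqrt m"
    using m by (simp add: b_def field_simps)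
  also have "\<dots> \<le> 3 * C * sqrt m"
    using C by (simp add: mult_right_mono)
  finally show ?thesis
    by (simp add: m_def)
qed simp

lemma monB_sum_abs_le_sqrt_card:
  assumes "x \<in> monB"
  obtains K where "\<And>T. finite T \<Longrightarrow> T \<subseteq> {1..} \<Longrightarrow> (\<Sum>n\<in>T. \<bar>x n\<bar>) \<le> K * sqrt (card T)"
proof -
  obtain C where "C > 0" and "\<forall>N f. (\<Sum>S\<in>Pow {1..N}. \<bar>walsh_coeff N f S * (\<Prod>n\<in>S. x n)\<bar>) \<le> C * supnorm N f"
    using assms unfolding monB_def by blast
  moreover have "T \<subseteq> {1..Max (insert 0 T)}" if "finite T" "T \<subseteq> {1..}" for T :: "nat set"
    using that by auto
  ultimately show ?thesis
    using that[of "3 * C"] sum_abs_le_sqrt_card by meson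
qed

lemma dec_rearr_le:
  assumes "finite A" "card A < n" "\<And>k. k \<ge> 1 \<Longrightarrow> k \<notin> A \<Longrightarrow> \<bar>x k\<bar> \<le> c"
  shows "dec_rearr x n \<le> ereal c"
proof -
  have "dec_rearr x n \<le> (SUP k\<in>{1..} - A. ereal \<bar>x k\<bar>)"
    unfolding dec_rearr_def using assms(1,2) by (intro INF_lower) auto
  also have "\<dots> \<le> ereal c"
    using assms(3) by (intro SUP_least) auto
  finally show ?thesis .
qed

lemma large_entries_card_less:
  fixes x :: "nat \<Rightarrow> real"
  assumes K: "\<And>T. finite T \<Longrightarrow> T \<subseteq> {1..} \<Longrightarrow> (\<Sum>n\<in>T. \<bar>x n\<bar>) \<le> K * sqrt (card T)"
    and n: "n \<ge> 1"
  defines "A \<equiv> {k. k \<ge> 1 \<and> \<bar>x k\<bar> > K / sqrt n}"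
  shows "finite A" "card A < n"
proof -
  have no_subset: "\<not> (B \<subseteq> A \<and> card B = n)" if "finite B" for B
  proof
    assume B: "B \<subseteq> A \<and> card B = n"
    hence "B \<noteq> {}"
      using n by auto
    hence "(\<Sum>k\<in>B. K / sqrt n) < (\<Sum>k\<in>B. \<bar>x k\<bar>)"
      using that B by (intro sum_strict_mono) (auto simp: A_def)
    also have "\<dots> \<le> K * sqrt n"
      using K[OF that] B by (auto simp: A_def)
    finally show False
      using B n by (simp add: field_simps)
  qed
  show "finite A"
    using no_subset infinite_arbitrarily_large by blast
  show "card A < n"
    using no_subset obtain_subset_with_card_n[of n A] \<open>finite A\<close>
    by (metis finite_subset not_less)
qed

lemma sqrt_mult_dec_rearr_le:
  assumes "\<And>T. finite T \<Longrightarrow> T \<subseteq> {1..} \<Longrightarrow> (\<Sum>n\<in>T. \<bar>x n\<bar>) \<le> K * sqrt (card T)"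
    and "n \<ge> 1"
  shows "ereal (sqrt n) * dec_rearr x n \<le> ereal K"
proof -
  have "dec_rearr x n \<le> ereal (K / sqrt n)"
    using large_entries_card_less[OF assms] by (intro dec_rearr_le) force+
  hence "ereal (sqrt n) * dec_rearr x n \<le> ereal (sqrt n) * ereal (K / sqrt n)"
    by (intro ereal_mult_left_mono) auto
  thus ?thesis
    using assms(2) by simp
qed

theorem proposition6p12:
  shows "(\<forall>x\<in>monB. \<exists>M::real. \<forall>N\<ge>1. (1 / sqrt (real N)) * (\<Sum>n=1..N. \<bar>x n\<bar>) \<le> M)
         \<and> monB \<subseteq> ell_2_inf"
proof (intro conjI ballI subsetI)
  fix x assume "x \<in> monB"
  then obtain K where K: "\<And>T. finite T \<Longrightarrow> T \<subseteq> {1..} \<Longrightarrow> (\<Sum>n\<in>T. \<bar>x n\<bar>) \<le> K * sqrt (card T)"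
    using monB_sum_abs_le_sqrt_card by blast
  have "(1 / sqrt (real N)) * (\<Sum>n=1..N. \<bar>x n\<bar>) \<le> K" if "N \<ge> 1" for N
    using K[of "{1..N}"] that by (simp add: field_simps)
  thus "\<exists>M::real. \<forall>N\<ge>1. (1 / sqrt (real N)) * (\<Sum>n=1..N. \<bar>x n\<bar>) \<le> M"
    by blast
next
  fix x assume "x \<in> monB"
  then obtain K where "\<And>T. finite T \<Longrightarrow> T \<subseteq> {1..} \<Longrightarrow> (\<Sum>n\<in>T. \<bar>x n\<bar>) \<le> K * sqrt (card T)"
    using monB_sum_abs_le_sqrt_card by blast
  thus "x \<in> ell_2_inf"
    unfolding ell_2_inf_def using sqrt_mult_dec_rearr_le by blast
qed

end
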